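(* Let $p$ be a complex polynomial of degree $m\ge1$ such that (1) $\mathbf1-p(L)$ is injective, (2) $p(L)^k\to0$ strongly as $k\to\infty$, and (3) every $z\in\mathbb C$ with $1-p(z)=0$ satisfies $|z|=1$. Let $\alpha_1,\dots,\alpha_m$ be the roots of $1-p(z)=0$ counted with multiplicity, and $X_p=\log(Y_p)-\log(Y_p^* )$ with $Y_p=\mathbf1-p(L)$. Then $\big[N,\frac imX_p\big]=-i\mathbf1$ on $\mathrm{ran}\big(\prod_{j=1}^m(\alpha_jL^*-\mathbf1)\big)\cap\mathrm D(X_pN)\cap\mathrm D(NX_p)$.
   Context: $\ell^2=\ell^2(\mathbb N)$, $\mathbb N=\{0,1,\dots\}$, basis $(\xi_n)$; $N\xi_n=n\xi_n$ (self-adjoint, maximal domain); $L$ left shift ($L\xi_n=\xi_{n-1}$, $L\xi_0=0$), $L^*$ right shift. For a linear operator $A$, $\mathrm D(\log A)=\{f\in\bigcap_{k\ge0}\mathrm D(A^k):\lim_K\sum_{k=1}^K\frac1k(\mathbf1-A)^kf\text{ exists}\}$, $\log Af=-\sum_{k\ge1}\frac1k(\mathbf1-A)^kf$; $X_p$ is defined on $\mathrm D(\log Y_p)\cap\mathrm D(\log Y_p^* )$. "$[A,B]=C$ on $\mathcal D$" means $\mathcal D\subset\mathrm D(AB)\cap\mathrm D(BA)$ and $(AB-BA)\varphi=C\varphi$ for $\varphi\in\mathcal D$. *)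

theory Defs
  imports "HOL-Analysis.Analysis" "HOL-Computational_Algebra.Polynomial"
begin

type_synonym vec = "nat \<Rightarrow> complex"

definition l2 :: "vec set" where
  "l2 = {f. summable (\<lambda>n. (cmod (f n))\<^sup>2)}"

definition l2norm :: "vec \<Rightarrow> real" where
  "l2norm f = sqrt (\<Sum>n. (cmod (f n))\<^sup>2)"

definition l2inner :: "vec \<Rightarrow> vec \<Rightarrow> complex" where
  "l2inner f g = (\<Sum>n. f n * cnj (g n))"

definition vadd :: "vec \<Rightarrow> vec \<Rightarrow> vec" where "vadd f g = (\<lambda>n. f n + g n)"
definition vsub :: "vec \<Rightarrow> vec \<Rightarrow> vec" where "vsub f g = (\<lambda>n. f n - g n)"
definition vscale :: "complex \<Rightarrow> vec \<Rightarrow> vec" where "vscale c f = (\<lambda>n. c * f n)"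

type_synonym op = "vec set \<times> (vec \<Rightarrow> vec)"

definition dom :: "op \<Rightarrow> vec set" where "dom A = fst A"
definition app :: "op \<Rightarrow> vec \<Rightarrow> vec" where "app A = snd A"

definition op_id :: op where "op_id = (l2, \<lambda>f. f)"

definition op_comp :: "op \<Rightarrow> op \<Rightarrow> op" where
  "op_comp A B = ({f \<in> dom B. app B f \<in> dom A}, \<lambda>f. app A (app B f))"

fun op_pow :: "op \<Rightarrow> nat \<Rightarrow> op" where
  "op_pow A 0 = op_id"
| "op_pow A (Suc k) = op_comp A (op_pow A k)"

definition op_scale :: "complex \<Rightarrow> op \<Rightarrow> op" where
  "op_scale c A = (dom A, \<lambda>f. vscale c (app A f))"

definition op_sub :: "op \<Rightarrow> op \<Rightarrow> op" where
  "op_sub A B = (dom A \<inter> dom B, \<lambda>f. vsub (app A f) (app B f))"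

definition op_poly :: "complex poly \<Rightarrow> op \<Rightarrow> op" where
  "op_poly p A = ((\<Inter>k\<in>{..degree p}. dom (op_pow A k)),
                  \<lambda>f n. (\<Sum>k\<le>degree p. coeff p k * app (op_pow A k) f n))"

definition op_adj :: "op \<Rightarrow> op" where
  "op_adj A = ({g \<in> l2. \<exists>h\<in>l2. \<forall>f\<in>dom A. l2inner (app A f) g = l2inner f h},
               \<lambda>g. THE h. h \<in> l2 \<and> (\<forall>f\<in>dom A. l2inner (app A f) g = l2inner f h))"

text \<open>Logarithm via the series  log A f = - sum_{k>=1} (1/k) (1 - A)^k f,
  convergence in l2 norm.\<close>
definition log_partial :: "op \<Rightarrow> vec \<Rightarrow> nat \<Rightarrow> vec" where
  "log_partial A f K = (\<lambda>n. \<Sum>k=1..K. (1 / of_nat k) * app (op_pow (op_sub op_id A) k) f n)"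

definition log_conv :: "op \<Rightarrow> vec \<Rightarrow> vec \<Rightarrow> bool" where
  "log_conv A f g \<longleftrightarrow> g \<in> l2 \<and> (\<lambda>K. l2norm (vsub (log_partial A f K) g)) \<longlonglongrightarrow> 0"

definition log_dom :: "op \<Rightarrow> vec set" where
  "log_dom A = {f. f \<in> (\<Inter>k. dom (op_pow A k)) \<and> (\<exists>g. log_conv A f g)}"

definition op_log :: "op \<Rightarrow> op" where
  "op_log A = (log_dom A, \<lambda>f. vscale (-1) (THE g. log_conv A f g))"

definition opN :: op where
  "opN = ({f \<in> l2. (\<lambda>n. of_nat n * f n) \<in> l2}, \<lambda>f n. of_nat n * f n)"

definition opL :: op where
  "opL = (l2, \<lambda>f n. f (Suc n))"

definition opLstar :: op where
  "opLstar = (l2, \<lambda>f n. if n = 0 then 0 else f (n - 1))"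

definition Yp :: "complex poly \<Rightarrow> op" where
  "Yp p = op_sub op_id (op_poly p opL)"

definition Xp :: "complex poly \<Rightarrow> op" where
  "Xp p = op_sub (op_log (Yp p)) (op_log (op_adj (Yp p)))"

definition commutator_on :: "op \<Rightarrow> op \<Rightarrow> op \<Rightarrow> vec set \<Rightarrow> bool" where
  "commutator_on A B C D \<longleftrightarrow>
     D \<subseteq> dom (op_comp A B) \<inter> dom (op_comp B A) \<and> D \<subseteq> dom C \<and>
     (\<forall>\<phi>\<in>D. vsub (app A (app B \<phi>)) (app B (app A \<phi>)) = app C \<phi>)"

definition op_range :: "op \<Rightarrow> vec set" where
  "op_range A = app A ` dom A"

fun root_prod :: "complex list \<Rightarrow> op" where
  "root_prod [] = op_id"
| "root_prod (a # as) = op_comp (op_sub (op_scale a opLstar) op_id) (root_prod as)"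

end

theory Submission
  imports Defs "HOL-Computational_Algebra.Fundamental_Theorem_Algebra"
begin

text \<open>Write \<open>L\<close> for the left shift and \<open>N\<close> for the number operator. For every polynomial
  \<open>a\<close> one has \<open>[N, a(L)] = -L a'(L)\<close> and \<open>[N, a(L\<^sup>*)] = L\<^sup>* a'(L\<^sup>*)\<close>, so in the partial sums of
  \<open>log Y\<^sub>p = -\<Sum> p(L)\<^sup>k / k\<close> the factor \<open>1/k\<close> cancels against the derivative of \<open>p\<^sup>k\<close> and the
  commutator with \<open>N\<close> becomes a geometric sum \<open>\<Sum>j<K. p(L)\<^sup>j L p'(L)\<close>; likewise for the
  adjoint. Since all roots of \<open>1 - p\<close> are unimodular, the range of \<open>\<Prod> (\<alpha>\<^sub>j L\<^sup>* - 1)\<close> lies in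
  the range of \<open>Y\<^sub>p\<^sup>* = q(L\<^sup>*)\<close>, \<open>q = conj (1 - p)\<close>, and \<open>L\<^sup>m q(L\<^sup>*) = \<kappa> (1 - p)(L)\<close> with \<open>\<kappa> \<noteq> 0\<close>.
  Commuting \<open>N\<close> through this relation factors \<open>L (1 - p)'(L) \<phi>\<close> through \<open>1 - p(L)\<close> for
  \<open>\<phi> = q(L\<^sup>*) g\<close>, and then both geometric sums telescope. What remains is \<open>m \<phi>\<close> up to terms
  \<open>p(L)\<^sup>K h\<close> and \<open>(p(L)\<^sup>*)\<^sup>K w\<close>, which vanish coordinatewise by the strong convergence
  hypothesis. Hence \<open>[N, X\<^sub>p] \<phi> = -m \<phi>\<close>.\<close>

subsection \<open>Polynomials in a linear map on sequences\<close>

definition left_shift :: "vec \<Rightarrow> vec" where "left_shift f = (\<lambda>n. f (Suc n))"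
definition right_shift :: "vec \<Rightarrow> vec" where "right_shift f = (\<lambda>n. if n = 0 then 0 else f (n - 1))"
definition number_op :: "vec \<Rightarrow> vec" where "number_op f = (\<lambda>n. of_nat n * f n)"

definition seq_linear :: "(vec \<Rightarrow> vec) \<Rightarrow> bool" where
  "seq_linear F \<longleftrightarrow> (\<forall>a f b g. F (\<lambda>n. a * f n + b * g n) = (\<lambda>n. a * F f n + b * F g n))"

lemma seq_linearD: "seq_linear F \<Longrightarrow> F (\<lambda>n. a * f n + b * g n) = (\<lambda>n. a * F f n + b * F g n)"
  unfolding seq_linear_def by blast

lemma seq_linear_scale: "seq_linear F \<Longrightarrow> F (\<lambda>n. a * f n) = (\<lambda>n. a * F f n)"
  using seq_linearD[of F a f 0 f] by simp

lemma seq_linear_zero: "seq_linear F \<Longrightarrow> F (\<lambda>n. 0) = (\<lambda>n. 0)"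
  using seq_linear_scale[of F 0 "\<lambda>n. 0"] by simp

lemma seq_linear_add: "seq_linear F \<Longrightarrow> F (\<lambda>n. f n + g n) = (\<lambda>n. F f n + F g n)"
  using seq_linearD[of F 1 f 1 g] by simp

lemma seq_linear_sum:
  assumes "seq_linear F" and "finite A"
  shows "F (\<lambda>n. \<Sum>k\<in>A. c k * g k n) = (\<lambda>n. \<Sum>k\<in>A. c k * F (g k) n)"
  using assms(2)
proof (induction A rule: finite_induct)
  case empty
  show ?case using seq_linear_zero[OF assms(1)] by simp
next
  case (insert x A)
  then show ?case using seq_linearD[OF assms(1), of "c x" "g x" 1 "\<lambda>n. \<Sum>k\<in>A. c k * g k n"] by simp
qed

lemma seq_linear_comp: "seq_linear F \<Longrightarrow> seq_linear G \<Longrightarrow> seq_linear (F \<circ> G)"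
  unfolding seq_linear_def by simp

lemma seq_linear_funpow: "seq_linear F \<Longrightarrow> seq_linear (F ^^ k)"
  by (induction k) (simp_all add: seq_linear_def seq_linear_comp[unfolded o_def])

lemma seq_linear_left_shift: "seq_linear left_shift"
  by (simp add: seq_linear_def left_shift_def)

lemma seq_linear_right_shift: "seq_linear right_shift"
  by (auto simp: seq_linear_def right_shift_def fun_eq_iff)

lemma seq_linear_number_op: "seq_linear number_op"
  by (simp add: seq_linear_def number_op_def fun_eq_iff algebra_simps)

definition poly_op :: "complex poly \<Rightarrow> (vec \<Rightarrow> vec) \<Rightarrow> vec \<Rightarrow> vec" where
  "poly_op p F f = (\<lambda>n. \<Sum>k\<le>degree p. coeff p k * (F ^^ k) f n)"

lemma poly_op_upto:
  assumes "degree p \<le> M"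
  shows "poly_op p F f = (\<lambda>n. \<Sum>k\<le>M. coeff p k * (F ^^ k) f n)"
proof -
  have "(\<Sum>k\<le>M. coeff p k * (F ^^ k) f n) = (\<Sum>k\<le>degree p. coeff p k * (F ^^ k) f n)" for n
    by (rule sum.mono_neutral_right) (use assms in \<open>auto simp: coeff_eq_0\<close>)
  then show ?thesis unfolding poly_op_def by simp
qed

lemma poly_op_0 [simp]: "poly_op 0 F f = (\<lambda>n. 0)"
  by (simp add: poly_op_def)

lemma poly_op_1 [simp]: "poly_op 1 F f = f"
  by (simp add: poly_op_def)

lemma poly_op_const: "poly_op [:c:] F f = (\<lambda>n. c * f n)"
  by (simp add: poly_op_def)

lemma poly_op_add: "poly_op (p + q) F f = (\<lambda>n. poly_op p F f n + poly_op q F f n)"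
proof -
  have "degree (p + q) \<le> max (degree p) (degree q)" by (rule degree_add_le) auto
  then show ?thesis by (simp add: poly_op_upto[of _ "max (degree p) (degree q)"] sum.distrib distrib_right)
qed

lemma poly_op_smult: "poly_op (smult c p) F f = (\<lambda>n. c * poly_op p F f n)"
  by (simp add: poly_op_upto[of _ "degree p"] sum_distrib_left mult.assoc)

lemma poly_op_minus: "poly_op (- p) F f = (\<lambda>n. - poly_op p F f n)"
  using poly_op_smult[of "-1" p F f] by simp

lemma poly_op_diff: "poly_op (p - q) F f = (\<lambda>n. poly_op p F f n - poly_op q F f n)"
  using poly_op_add[of p "- q" F f] poly_op_minus[of q F f] by simp

lemma poly_op_pCons:
  assumes "seq_linear F"
  shows "poly_op (pCons c q) F f = (\<lambda>n. c * f n + F (poly_op q F f) n)"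
proof -
  have "degree (pCons c q) \<le> Suc (degree q)" by (simp add: degree_pCons_le)
  moreover have "F (poly_op q F f) = (\<lambda>n. \<Sum>k\<le>degree q. coeff q k * F ((F ^^ k) f) n)"
    unfolding poly_op_def by (rule seq_linear_sum[OF assms finite_atMost])
  ultimately show ?thesis
    by (simp add: poly_op_upto[of "pCons c q" "Suc (degree q)"] sum.atMost_Suc_shift del: sum.atMost_Suc)
qed

lemma poly_op_X: "seq_linear F \<Longrightarrow> poly_op [:0, 1:] F f = F f"
  using poly_op_pCons[of F 0 1 f] by (simp add: one_pCons poly_op_const seq_linear_scale[of F 0 f, symmetric])

lemma seq_linear_poly_op:
  assumes "seq_linear F"
  shows "seq_linear (poly_op p F)"
proof -
  have "(F ^^ k) (\<lambda>n. a * f n + b * g n) = (\<lambda>n. a * (F ^^ k) f n + b * (F ^^ k) g n)" for k a f b g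
    using seq_linearD[OF seq_linear_funpow[OF assms]] .
  then show ?thesis unfolding seq_linear_def poly_op_def
    by (simp add: sum.distrib sum_distrib_left distrib_left mult.left_commute)
qed

lemma poly_op_mult:
  assumes "seq_linear F"
  shows "poly_op (p * q) F f = poly_op p F (poly_op q F f)"
proof (induction p)
  case 0
  then show ?case by simp
next
  case (pCons c p)
  have "poly_op (pCons c p * q) F f = poly_op (smult c q + pCons 0 (p * q)) F f" by simp
  also have "\<dots> = poly_op (pCons c p) F (poly_op q F f)"
    by (simp add: poly_op_add poly_op_smult poly_op_pCons[OF assms] pCons.IH)
  finally show ?case .
qed

lemma poly_op_commute: "seq_linear F \<Longrightarrow> poly_op p F (poly_op q F f) = poly_op q F (poly_op p F f)"
  by (metis poly_op_mult mult.commute)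

lemma poly_op_power: "seq_linear F \<Longrightarrow> poly_op (p ^ k) F f = (poly_op p F ^^ k) f"
  by (induction k) (simp_all add: poly_op_mult)

lemma poly_op_commute_map:
  "seq_linear F \<Longrightarrow> F (poly_op p F f) = poly_op p F (F f)"
  by (metis poly_op_X poly_op_commute)

lemma number_op_poly_op:
  assumes F: "seq_linear F" and shift: "\<And>f. number_op (F f) = (\<lambda>n. F (number_op f) n + c * F f n)"
  shows "number_op (poly_op a F f) = (\<lambda>n. poly_op a F (number_op f) n + c * poly_op (pCons 0 (pderiv a)) F f n)"
proof (induction a)
  case 0
  then show ?case by (simp add: number_op_def)
next
  case (pCons c0 q)
  let ?w = "poly_op q F f" and ?z = "poly_op (pCons 0 (pderiv q)) F f"
  have "number_op (poly_op (pCons c0 q) F f) = (\<lambda>n. c0 * number_op f n + number_op (F ?w) n)"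
    by (simp add: poly_op_pCons[OF F] number_op_def algebra_simps)
  also have "number_op (F ?w) = (\<lambda>n. F (poly_op q F (number_op f)) n + c * (F ?z n + F ?w n))"
    by (simp add: shift pCons.IH seq_linearD[OF F, of 1 _ c, simplified] algebra_simps)
  moreover have "poly_op (pCons 0 (pderiv (pCons c0 q))) F f = F (\<lambda>n. ?w n + ?z n)"
    by (simp add: poly_op_pCons[OF F] pderiv_pCons poly_op_add)
  ultimately show ?case
    by (simp add: poly_op_pCons[OF F] seq_linear_add[OF F] algebra_simps)
qed

lemma number_op_poly_op_power:
  assumes F: "seq_linear F" and shift: "\<And>f. number_op (F f) = (\<lambda>n. F (number_op f) n + c * F f n)"
  shows "number_op (poly_op (p ^ Suc k) F f) n = poly_op (p ^ Suc k) F (number_op f) n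
           + c * of_nat (Suc k) * poly_op (p ^ k) F (poly_op (pCons 0 (pderiv p)) F f) n"
proof -
  have "pCons 0 (pderiv (p ^ Suc k)) = smult (of_nat (Suc k)) (p ^ k * pCons 0 (pderiv p))"
    unfolding pderiv_power_Suc by (simp add: mult_pCons_right algebra_simps)
  moreover have "number_op (poly_op (p ^ Suc k) F f) n = poly_op (p ^ Suc k) F (number_op f) n
      + c * poly_op (pCons 0 (pderiv (p ^ Suc k))) F f n"
    by (simp only: number_op_poly_op[OF F shift])
  ultimately show ?thesis
    by (simp only: poly_op_smult poly_op_mult[OF F] mult.assoc)
qed

lemma poly_op_geometric_sum:
  assumes "seq_linear F"
  shows "(\<Sum>j<K. poly_op (p ^ j) F (poly_op (1 - p) F h) n) = h n - poly_op (p ^ K) F h n"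
proof -
  have "poly_op (p ^ j) F (poly_op (1 - p) F h) n = poly_op (p ^ j) F h n - poly_op (p ^ Suc j) F h n" for j
  proof -
    have "poly_op (p ^ j) F (poly_op (1 - p) F h) = poly_op (p ^ j * (1 - p)) F h"
      by (rule poly_op_mult[OF assms, symmetric])
    also have "p ^ j * (1 - p) = p ^ j - p ^ Suc j" by (simp add: algebra_simps)
    finally show ?thesis by (simp only: poly_op_diff)
  qed
  then show ?thesis
    using sum_lessThan_telescope'[of "\<lambda>j. poly_op (p ^ j) F h n" K] by simp
qed

text \<open>The factors \<open>1/k\<close> cancel against the derivative of \<open>p\<^sup>k\<close>, and once \<open>F (1 - p)'(F) \<phi>\<close>
  factors through \<open>(1 - p)(F)\<close> the resulting geometric sum telescopes.\<close>

lemma commutator_log_partial_sum: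
  assumes F: "seq_linear F" and shift: "\<And>f. number_op (F f) = (\<lambda>n. F (number_op f) n + c * F f n)"
    and factor: "poly_op (pCons 0 (pderiv (1 - p))) F \<phi> = poly_op (1 - p) F h"
  shows "of_nat n * (\<Sum>k=1..K. 1 / of_nat k * poly_op (p ^ k) F \<phi> n)
           - (\<Sum>k=1..K. 1 / of_nat k * poly_op (p ^ k) F (number_op \<phi>) n)
         = - c * (h n - poly_op (p ^ K) F h n)"
proof -
  have D: "poly_op (pCons 0 (pderiv p)) F \<phi> = (\<lambda>n. - poly_op (1 - p) F h n)"
    using factor poly_op_minus[of "pCons 0 (pderiv (1 - p))" F \<phi>]
    by (simp add: pderiv_diff minus_pCons)
  have "1 / of_nat (Suc j) * (of_nat n * poly_op (p ^ Suc j) F \<phi> n - poly_op (p ^ Suc j) F (number_op \<phi>) n)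
      = - c * poly_op (p ^ j) F (poly_op (1 - p) F h) n" for j
    using number_op_poly_op_power[OF F shift, of p j \<phi> n]
    by (simp add: D seq_linear_scale[OF seq_linear_poly_op[OF F], of "p ^ j" "-1", simplified]
        number_op_def field_simps del: of_nat_Suc)
  then have "of_nat n * (\<Sum>k=1..K. 1 / of_nat k * poly_op (p ^ k) F \<phi> n)
           - (\<Sum>k=1..K. 1 / of_nat k * poly_op (p ^ k) F (number_op \<phi>) n)
      = - c * (\<Sum>j<K. poly_op (p ^ j) F (poly_op (1 - p) F h) n)"
    by (simp add: sum.atLeast1_atMost_eq sum_distrib_left sum_subtractf[symmetric]
        right_diff_distrib mult.left_commute del: of_nat_Suc)
  then show ?thesis by (simp only: poly_op_geometric_sum[OF F])
qed

subsection \<open>Shifts and the number operator\<close>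

lemma funpow_left_shift: "(left_shift ^^ k) f n = f (n + k)"
  by (induction k arbitrary: n) (simp_all add: left_shift_def)

lemma number_op_left_shift:
  "number_op (left_shift f) = (\<lambda>n. left_shift (number_op f) n + (- 1) * left_shift f n)"
  by (simp add: number_op_def left_shift_def fun_eq_iff algebra_simps)

lemma number_op_right_shift:
  "number_op (right_shift f) = (\<lambda>n. right_shift (number_op f) n + 1 * right_shift f n)"
  by (simp add: number_op_def right_shift_def fun_eq_iff of_nat_diff algebra_simps)

lemma number_op_poly_left_shift:
  "number_op (poly_op a left_shift f)
     = (\<lambda>n. poly_op a left_shift (number_op f) n - poly_op (pCons 0 (pderiv a)) left_shift f n)"
  using number_op_poly_op[OF seq_linear_left_shift number_op_left_shift] by simp

lemma number_op_poly_right_shift: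
  "number_op (poly_op a right_shift f)
     = (\<lambda>n. poly_op a right_shift (number_op f) n + poly_op (pCons 0 (pderiv a)) right_shift f n)"
  using number_op_poly_op[OF seq_linear_right_shift number_op_right_shift] by simp

lemma number_op_funpow_left_shift:
  "number_op ((left_shift ^^ m) f) = (\<lambda>n. (left_shift ^^ m) (number_op f) n - of_nat m * (left_shift ^^ m) f n)"
  by (simp add: funpow_left_shift number_op_def fun_eq_iff algebra_simps)

lemma funpow_left_shift_poly_right_shift:
  "(left_shift ^^ length bs) (poly_op (\<Prod>b\<leftarrow>bs. [:- b, 1:]) right_shift v)
     = poly_op (\<Prod>b\<leftarrow>bs. [:1, - b:]) left_shift v"
proof (induction bs arbitrary: v)
  case Nil
  then show ?case by simp
next
  case (Cons b bs)
  let ?w = "poly_op (\<Prod>b\<leftarrow>bs. [:- b, 1:]) right_shift v"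
  let ?u = "poly_op (\<Prod>b\<leftarrow>bs. [:1, - b:]) left_shift v"
  have "poly_op (\<Prod>b\<leftarrow>b # bs. [:- b, 1:]) right_shift v = poly_op [:- b, 1:] right_shift ?w"
    by (simp only: list.map prod_list.Cons poly_op_mult[OF seq_linear_right_shift])
  also have "\<dots> = (\<lambda>n. - b * ?w n + right_shift ?w n)"
    by (simp add: poly_op_pCons[OF seq_linear_right_shift] poly_op_const seq_linear_zero[OF seq_linear_right_shift])
  finally have "poly_op (\<Prod>b\<leftarrow>b # bs. [:- b, 1:]) right_shift v = (\<lambda>n. - b * ?w n + right_shift ?w n)" .
  then have "(left_shift ^^ length (b # bs)) (poly_op (\<Prod>b\<leftarrow>b # bs. [:- b, 1:]) right_shift v)
      = (left_shift ^^ length bs) (\<lambda>n. - b * left_shift ?w n + ?w n)"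
    by (simp add: funpow_swap1 left_shift_def right_shift_def)
  also have "\<dots> = (\<lambda>n. - b * left_shift ((left_shift ^^ length bs) ?w) n + (left_shift ^^ length bs) ?w n)"
    by (simp add: funpow_left_shift left_shift_def fun_eq_iff)
  also have "\<dots> = (\<lambda>n. - b * left_shift ?u n + ?u n)"
    by (simp only: Cons.IH)
  also have "\<dots> = poly_op [:1, - b:] left_shift ?u"
    by (simp add: poly_op_pCons[OF seq_linear_left_shift] poly_op_const left_shift_def)
  also have "\<dots> = poly_op (\<Prod>b\<leftarrow>b # bs. [:1, - b:]) left_shift v"
    by (simp only: list.map prod_list.Cons poly_op_mult[OF seq_linear_left_shift])
  finally show ?case .
qed

text \<open>Commuting \<open>N\<close> through both sides of the intertwining relation \<open>L\<^sup>m Q(L\<^sup>*) = \<kappa> P(L)\<close>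
  and comparing the two results.\<close>

lemma intertwining_derivative_identity:
  assumes intertwine: "\<And>v. (left_shift ^^ m) (poly_op Q right_shift v) = (\<lambda>n. \<kappa> * poly_op P left_shift v n)"
    and "\<kappa> \<noteq> 0"
  shows "poly_op (pCons 0 (pderiv P)) left_shift (poly_op Q right_shift g)
       = poly_op P left_shift (\<lambda>n. of_nat m * poly_op Q right_shift g n - poly_op (pCons 0 (pderiv Q)) right_shift g n)"
proof
  fix n
  define Y where "Y = poly_op P left_shift"
  define Yc where "Yc = poly_op Q right_shift"
  define D where "D = poly_op (pCons 0 (pderiv P)) left_shift"
  define Dc where "Dc = poly_op (pCons 0 (pderiv Q)) right_shift"
  have SY: "(left_shift ^^ m) (Yc v) n = \<kappa> * Y v n" for v n
    using intertwine[of v] by (simp add: Y_def Yc_def)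
  have commutator: "(left_shift ^^ m) (Dc v) n = of_nat m * \<kappa> * Y v n - \<kappa> * D v n" for v
  proof -
    have "number_op ((left_shift ^^ m) (Yc v)) n = \<kappa> * (Y (number_op v) n - D v n)"
      using intertwine[of v]
      by (simp add: Y_def Yc_def D_def number_op_poly_left_shift seq_linear_scale[OF seq_linear_number_op])
    moreover have "number_op ((left_shift ^^ m) (Yc v)) n
        = (left_shift ^^ m) (number_op (Yc v)) n - of_nat m * (left_shift ^^ m) (Yc v) n"
      by (simp only: number_op_funpow_left_shift)
    moreover have "number_op (Yc v) = (\<lambda>n. Yc (number_op v) n + Dc v n)"
      by (simp add: Yc_def Dc_def number_op_poly_right_shift)
    moreover have "(left_shift ^^ m) (\<lambda>n. Yc (number_op v) n + Dc v n) n
        = \<kappa> * Y (number_op v) n + (left_shift ^^ m) (Dc v) n"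
      using SY[of "number_op v"] by (simp add: funpow_left_shift)
    ultimately show ?thesis using SY[of v n] by (simp add: algebra_simps)
  qed
  have "\<kappa> * Y (Dc g) n = (left_shift ^^ m) (Dc (Yc g)) n"
    by (simp add: SY[symmetric] Dc_def Yc_def poly_op_commute[OF seq_linear_right_shift])
  also have "\<dots> = \<kappa> * (of_nat m * Y (Yc g) n - D (Yc g) n)"
    by (simp add: commutator algebra_simps)
  finally have "Y (Dc g) n = of_nat m * Y (Yc g) n - D (Yc g) n"
    using assms(2) by simp
  then have "D (Yc g) n = of_nat m * Y (Yc g) n - Y (Dc g) n"
    by simp
  also have "\<dots> = Y (\<lambda>n. of_nat m * Yc g n - Dc g n) n"
    using seq_linearD[OF seq_linear_poly_op[OF seq_linear_left_shift], of P "of_nat m" "Yc g" "-1" "Dc g"]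
    by (simp add: Y_def)
  finally show "D (Yc g) n = Y (\<lambda>n. of_nat m * Yc g n - Dc g n) n" .
qed

subsection \<open>The sequence space \<open>l2\<close>\<close>

lemma l2_add:
  assumes "f \<in> l2" "g \<in> l2"
  shows "(\<lambda>n. f n + g n) \<in> l2"
proof -
  have bound: "norm ((cmod (f n + g n))\<^sup>2) \<le> 2 * (cmod (f n))\<^sup>2 + 2 * (cmod (g n))\<^sup>2" for n
  proof -
    have "(cmod (f n + g n))\<^sup>2 \<le> (cmod (f n) + cmod (g n))\<^sup>2"
      by (simp add: power_mono norm_triangle_ineq)
    also have "\<dots> \<le> 2 * (cmod (f n))\<^sup>2 + 2 * (cmod (g n))\<^sup>2"
      unfolding power2_sum using sum_squares_bound[of "cmod (f n)" "cmod (g n)"] by linarith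
    finally show ?thesis by simp
  qed
  have "summable (\<lambda>n. 2 * (cmod (f n))\<^sup>2 + 2 * (cmod (g n))\<^sup>2)"
    using assms by (intro summable_add summable_mult) (simp_all add: l2_def)
  then have "summable (\<lambda>n. (cmod (f n + g n))\<^sup>2)"
    by (rule summable_comparison_test') (rule bound)
  then show ?thesis unfolding l2_def by simp
qed

lemma l2_scale: "f \<in> l2 \<Longrightarrow> (\<lambda>n. c * f n) \<in> l2"
  using summable_mult[of "\<lambda>n. (cmod (f n))\<^sup>2" "(cmod c)\<^sup>2"]
  by (simp add: l2_def norm_mult power_mult_distrib)

lemma l2_zero [simp]: "(\<lambda>n. 0) \<in> l2"
  by (simp add: l2_def)

lemma l2_diff: "f \<in> l2 \<Longrightarrow> g \<in> l2 \<Longrightarrow> (\<lambda>n. f n - g n) \<in> l2"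
  using l2_add[of f "\<lambda>n. (- 1) * g n"] l2_scale[of g "- 1"] by simp

lemma l2_sum: "finite A \<Longrightarrow> (\<And>k. k \<in> A \<Longrightarrow> g k \<in> l2) \<Longrightarrow> (\<lambda>n. \<Sum>k\<in>A. c k * g k n) \<in> l2"
proof (induction A rule: finite_induct)
  case empty
  then show ?case by simp
next
  case (insert x A)
  then show ?case using l2_add[OF l2_scale[of "g x" "c x"]] by simp
qed

lemma l2_left_shift: "f \<in> l2 \<Longrightarrow> left_shift f \<in> l2"
  using summable_ignore_initial_segment[of "\<lambda>n. (cmod (f n))\<^sup>2" 1]
  by (simp add: l2_def left_shift_def)

lemma l2_right_shift: "f \<in> l2 \<Longrightarrow> right_shift f \<in> l2"
  using summable_Suc_iff[of "\<lambda>n. (cmod (right_shift f n))\<^sup>2"]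
  by (simp add: l2_def right_shift_def)

lemma l2_funpow: "(\<And>f. f \<in> l2 \<Longrightarrow> F f \<in> l2) \<Longrightarrow> f \<in> l2 \<Longrightarrow> (F ^^ k) f \<in> l2"
  by (induction k) auto

lemma l2_poly_op: "(\<And>f. f \<in> l2 \<Longrightarrow> F f \<in> l2) \<Longrightarrow> f \<in> l2 \<Longrightarrow> poly_op p F f \<in> l2"
  unfolding poly_op_def by (intro l2_sum l2_funpow) auto

lemma l2_poly_left_shift: "f \<in> l2 \<Longrightarrow> poly_op p left_shift f \<in> l2"
  by (rule l2_poly_op[OF l2_left_shift])

lemma l2_poly_right_shift: "f \<in> l2 \<Longrightarrow> poly_op p right_shift f \<in> l2"
  by (rule l2_poly_op[OF l2_right_shift])

lemma l2norm_nonneg: "f \<in> l2 \<Longrightarrow> 0 \<le> l2norm f"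
  by (simp add: l2norm_def l2_def suminf_nonneg)

lemma norm_le_l2norm:
  assumes "f \<in> l2"
  shows "cmod (f n) \<le> l2norm f"
proof -
  have "(cmod (f n))\<^sup>2 \<le> (\<Sum>n. (cmod (f n))\<^sup>2)"
    using assms unfolding l2_def by (intro sum_le_suminf[of _ "{n}", simplified]) auto
  then show ?thesis unfolding l2norm_def by (simp add: real_le_rsqrt)
qed

lemma l2norm_tendsto_zero_coord:
  assumes "\<And>K. h K \<in> l2" and "(\<lambda>K. l2norm (h K)) \<longlonglongrightarrow> 0"
  shows "(\<lambda>K. h K n) \<longlonglongrightarrow> 0"
  by (rule Lim_null_comparison[OF _ assms(2)]) (use norm_le_l2norm[OF assms(1)] in auto)

lemma summable_norm_mult_l2:
  assumes "f \<in> l2" "g \<in> l2"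
  shows "summable (\<lambda>n. cmod (f n) * cmod (g n))"
proof -
  have bound: "norm (cmod (f n) * cmod (g n)) \<le> (cmod (f n))\<^sup>2 + (cmod (g n))\<^sup>2" for n
  proof -
    have "0 \<le> cmod (f n) * cmod (g n)" "norm (cmod (f n) * cmod (g n)) = cmod (f n) * cmod (g n)"
      by (simp_all add: abs_mult)
    then show ?thesis using sum_squares_bound[of "cmod (f n)" "cmod (g n)"] by linarith
  qed
  have "summable (\<lambda>n. (cmod (f n))\<^sup>2 + (cmod (g n))\<^sup>2)"
    using assms by (intro summable_add) (simp_all add: l2_def)
  then show ?thesis by (rule summable_comparison_test') (rule bound)
qed

lemma summable_l2inner:
  assumes "f \<in> l2" "g \<in> l2"
  shows "summable (\<lambda>n. f n * cnj (g n))"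
  by (rule summable_norm_cancel) (use summable_norm_mult_l2[OF assms] in \<open>simp add: norm_mult\<close>)

lemma l2inner_add_left:
  "f \<in> l2 \<Longrightarrow> g \<in> l2 \<Longrightarrow> h \<in> l2 \<Longrightarrow> l2inner (\<lambda>n. f n + g n) h = l2inner f h + l2inner g h"
  unfolding l2inner_def by (simp add: distrib_right suminf_add summable_l2inner)

lemma l2inner_add_right:
  "f \<in> l2 \<Longrightarrow> g \<in> l2 \<Longrightarrow> h \<in> l2 \<Longrightarrow> l2inner h (\<lambda>n. f n + g n) = l2inner h f + l2inner h g"
  unfolding l2inner_def by (simp add: distrib_left suminf_add summable_l2inner)

lemma l2inner_scale_left: "f \<in> l2 \<Longrightarrow> h \<in> l2 \<Longrightarrow> l2inner (\<lambda>n. c * f n) h = c * l2inner f h"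
  unfolding l2inner_def by (simp add: mult.assoc suminf_mult summable_l2inner)

lemma l2inner_scale_right:
  assumes "f \<in> l2" "h \<in> l2"
  shows "l2inner h (\<lambda>n. c * f n) = cnj c * l2inner h f"
proof -
  have "l2inner h (\<lambda>n. c * f n) = (\<Sum>n. cnj c * (h n * cnj (f n)))"
    unfolding l2inner_def by (simp add: algebra_simps)
  then show ?thesis unfolding l2inner_def using assms by (simp add: suminf_mult summable_l2inner)
qed

lemma l2inner_left_shift:
  assumes "f \<in> l2" "g \<in> l2"
  shows "l2inner (left_shift f) g = l2inner f (right_shift g)"
  using suminf_split_head[OF summable_l2inner[OF assms(1) l2_right_shift[OF assms(2)]]]
  by (simp add: l2inner_def left_shift_def right_shift_def)

lemma l2_Cauchy_Schwarz:
  assumes "f \<in> l2" "g \<in> l2"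
  shows "cmod (l2inner f g) \<le> l2norm f * l2norm g"
proof -
  have sa: "summable (\<lambda>n. cmod (f n) * cmod (g n))" by (rule summable_norm_mult_l2[OF assms])
  have "cmod (l2inner f g) \<le> (\<Sum>n. cmod (f n) * cmod (g n))"
    unfolding l2inner_def using summable_norm[of "\<lambda>n. f n * cnj (g n)"] sa by (simp add: norm_mult)
  also have "\<dots> \<le> l2norm f * l2norm g"
  proof (rule suminf_le_const[OF sa])
    have partial: "L2_set (\<lambda>n. cmod (h n)) {..<M} \<le> l2norm h" if "h \<in> l2" for h and M
      unfolding L2_set_def l2norm_def using that
      by (intro real_sqrt_le_mono sum_le_suminf) (auto simp: l2_def)
    fix M
    have "(\<Sum>n<M. cmod (f n) * cmod (g n)) \<le> L2_set (\<lambda>n. cmod (f n)) {..<M} * L2_set (\<lambda>n. cmod (g n)) {..<M}"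
      using L2_set_mult_ineq[of "\<lambda>n. cmod (f n)" "\<lambda>n. cmod (g n)" "{..<M}"] by simp
    also have "\<dots> \<le> l2norm f * l2norm g"
      by (rule mult_mono) (use assms in \<open>auto intro: partial l2norm_nonneg L2_set_nonneg\<close>)
    finally show "(\<Sum>n<M. cmod (f n) * cmod (g n)) \<le> l2norm f * l2norm g" .
  qed
  finally show ?thesis .
qed

definition unit_vec :: "nat \<Rightarrow> vec" where "unit_vec j = (\<lambda>n. if n = j then 1 else 0)"

lemma l2_unit_vec: "unit_vec j \<in> l2"
proof -
  have "(\<lambda>n. (cmod (unit_vec j n))\<^sup>2) = (\<lambda>n. if n = j then 1 else 0)"
    by (auto simp: unit_vec_def)
  then show ?thesis unfolding l2_def using sums_summable[OF sums_single[of j "\<lambda>_. 1::real"]] by simp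
qed

lemma l2inner_unit_vec_left: "l2inner (unit_vec j) v = cnj (v j)"
proof -
  have "(\<lambda>n. unit_vec j n * cnj (v n)) = (\<lambda>n. if n = j then cnj (v n) else 0)"
    by (auto simp: unit_vec_def)
  then show ?thesis unfolding l2inner_def using sums_unique[OF sums_single[of j "\<lambda>n. cnj (v n)"]] by simp
qed

lemma l2inner_right_cancel:
  assumes "h \<in> l2" "h' \<in> l2" and "\<And>f. f \<in> l2 \<Longrightarrow> l2inner f h = l2inner f h'"
  shows "h = h'"
proof
  fix n
  show "h n = h' n" using assms(3)[OF l2_unit_vec[of n]] by (simp add: l2inner_unit_vec_left)
qed

lemma l2inner_poly_left_shift:
  assumes "f \<in> l2" "g \<in> l2"
  shows "l2inner (poly_op a left_shift f) g = l2inner f (poly_op (map_poly cnj a) right_shift g)"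
  using assms(2)
proof (induction a arbitrary: g)
  case 0
  then show ?case by (simp add: l2inner_def)
next
  case (pCons c q)
  let ?w = "poly_op q left_shift f" and ?u = "poly_op (map_poly cnj q) right_shift g"
  have w: "?w \<in> l2" and u: "?u \<in> l2"
    using assms(1) pCons.prems by (simp_all add: l2_poly_left_shift l2_poly_right_shift)
  have "l2inner (poly_op (pCons c q) left_shift f) g = c * l2inner f g + l2inner (left_shift ?w) g"
    using assms(1) pCons.prems w l2_left_shift[OF w] l2_scale[of f c]
    by (simp add: poly_op_pCons[OF seq_linear_left_shift] l2inner_add_left l2inner_scale_left)
  also have "l2inner (left_shift ?w) g = l2inner f (right_shift ?u)"
    using pCons.IH[OF l2_right_shift[OF pCons.prems]]
    by (simp add: l2inner_left_shift[OF w pCons.prems] poly_op_commute_map[OF seq_linear_right_shift])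
  also have "c * l2inner f g + l2inner f (right_shift ?u) = l2inner f (poly_op (map_poly cnj (pCons c q)) right_shift g)"
    using assms(1) pCons.prems u l2_right_shift[OF u] l2_scale[of g "cnj c"]
    by (simp add: map_poly_pCons poly_op_pCons[OF seq_linear_right_shift] l2inner_add_right l2inner_scale_right)
  finally show ?case .
qed

lemma dom_op_id [simp]: "dom op_id = l2" and app_op_id [simp]: "app op_id f = f"
  by (simp_all add: op_id_def dom_def app_def)

lemma dom_op_comp: "dom (op_comp A B) = {f \<in> dom B. app B f \<in> dom A}"
  and app_op_comp: "app (op_comp A B) f = app A (app B f)"
  by (simp_all add: op_comp_def dom_def app_def)

lemma dom_op_sub: "dom (op_sub A B) = dom A \<inter> dom B"
  and app_op_sub: "app (op_sub A B) f = vsub (app A f) (app B f)"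
  by (simp_all add: op_sub_def dom_def app_def)

lemma dom_op_scale: "dom (op_scale c A) = dom A"
  and app_op_scale: "app (op_scale c A) f = vscale c (app A f)"
  by (simp_all add: op_scale_def dom_def app_def)

lemma app_opLstar: "app opLstar = right_shift"
  by (simp add: opLstar_def app_def right_shift_def[abs_def])

lemma dom_opN: "dom opN = {f \<in> l2. number_op f \<in> l2}" and app_opN: "app opN = number_op"
  by (simp_all add: opN_def dom_def app_def number_op_def[abs_def])

lemma dom_opL: "dom opL = l2" and app_opL: "app opL = left_shift"
  by (simp_all add: opL_def dom_def app_def left_shift_def[abs_def])

lemma app_op_pow: "app (op_pow A k) = app A ^^ k"
proof (induction k)
  case 0
  then show ?case by (simp add: fun_eq_iff)
next
  case (Suc k)
  show ?case by (rule ext) (simp add: app_op_comp Suc.IH)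
qed

lemma dom_op_pow_total:
  assumes "dom A = l2" and "\<And>f. f \<in> l2 \<Longrightarrow> app A f \<in> l2"
  shows "dom (op_pow A k) = l2"
proof (induction k)
  case 0
  then show ?case by simp
next
  case (Suc k)
  have "app (op_pow A k) f \<in> l2" if "f \<in> l2" for f
    unfolding app_op_pow by (rule l2_funpow[OF assms(2) that])
  then show ?case using Suc by (auto simp: dom_op_comp assms(1))
qed

lemma dom_op_poly_opL: "dom (op_poly p opL) = l2"
  using dom_op_pow_total[of opL] by (simp add: op_poly_def dom_def[of "(_, _)"] dom_opL app_opL l2_left_shift)

lemma app_op_poly_opL: "app (op_poly p opL) = poly_op p left_shift"
  by (simp add: op_poly_def app_def[of "(_, _)"] fun_eq_iff app_op_pow app_opL poly_op_def)

lemma dom_Yp: "dom (Yp p) = l2"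
  by (simp add: Yp_def dom_op_sub dom_op_poly_opL)

lemma app_Yp: "app (Yp p) f = poly_op (1 - p) left_shift f"
  by (simp add: Yp_def app_op_sub app_op_poly_opL vsub_def poly_op_diff)

lemma app_pow_op_poly_opL: "app (op_pow (op_poly p opL) k) f = poly_op (p ^ k) left_shift f"
  by (simp add: app_op_pow app_op_poly_opL poly_op_power[OF seq_linear_left_shift])

lemma app_pow_one_minus_Yp: "app (op_pow (op_sub op_id (Yp p)) k) f = poly_op (p ^ k) left_shift f"
proof -
  have "app (op_sub op_id (Yp p)) = poly_op p left_shift"
    by (simp add: app_op_sub app_Yp vsub_def poly_op_diff fun_eq_iff)
  then show ?thesis by (simp add: app_op_pow poly_op_power[OF seq_linear_left_shift])
qed

lemma app_adj_Yp:
  assumes "g \<in> l2"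
  shows "app (op_adj (Yp p)) g = poly_op (map_poly cnj (1 - p)) right_shift g"
proof -
  have adjoint: "h \<in> l2 \<and> (\<forall>f\<in>dom (Yp p). l2inner (app (Yp p) f) g = l2inner f h)
      \<longleftrightarrow> h = poly_op (map_poly cnj (1 - p)) right_shift g" if g: "g \<in> l2" for g h
    using g l2_poly_right_shift[OF g] l2inner_right_cancel[of h "poly_op (map_poly cnj (1 - p)) right_shift g"]
    by (auto simp: dom_Yp app_Yp l2inner_poly_left_shift)
  show ?thesis
    unfolding op_adj_def app_def[of "(_, _)"] snd_conv using adjoint[OF assms] by simp
qed

lemma one_minus_map_poly_cnj: "1 - map_poly cnj (1 - p) = map_poly cnj p"
  by (rule poly_eqI) (simp add: coeff_map_poly)

lemma app_pow_one_minus_adj_Yp: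
  "g \<in> l2 \<Longrightarrow> app (op_pow (op_sub op_id (op_adj (Yp p))) k) g = poly_op (map_poly cnj p ^ k) right_shift g"
proof (induction k)
  case 0
  then show ?case by simp
next
  case (Suc k)
  have "app (op_sub op_id (op_adj (Yp p))) f = poly_op (map_poly cnj p) right_shift f" if "f \<in> l2" for f
    using that one_minus_map_poly_cnj[of p] poly_op_diff[of 1 "map_poly cnj (1 - p)" right_shift f]
    by (simp add: app_op_sub app_adj_Yp vsub_def)
  then show ?case
    using Suc by (simp add: app_op_comp l2_poly_right_shift poly_op_mult[OF seq_linear_right_shift])
qed

lemma log_dom_subset_l2: "log_dom A \<subseteq> l2"
proof
  fix f assume "f \<in> log_dom A"
  then have "f \<in> dom (op_pow A 0)" unfolding log_dom_def by blast
  then show "f \<in> l2" by simp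
qed

lemma log_partial_tendsto_coord:
  assumes f: "f \<in> log_dom A" and partial_l2: "\<And>K. log_partial A f K \<in> l2"
  shows "(\<lambda>K. log_partial A f K n) \<longlonglongrightarrow> - app (op_log A) f n"
proof -
  have coord: "(\<lambda>K. log_partial A f K n) \<longlonglongrightarrow> g n" if "log_conv A f g" for g n
  proof -
    have "g \<in> l2" and "(\<lambda>K. l2norm (vsub (log_partial A f K) g)) \<longlonglongrightarrow> 0"
      using that by (auto simp: log_conv_def)
    then have "(\<lambda>K. log_partial A f K n - g n) \<longlonglongrightarrow> 0"
      using l2norm_tendsto_zero_coord[of "\<lambda>K. vsub (log_partial A f K) g"] partial_l2
      by (simp add: vsub_def l2_diff)
    then show ?thesis by (simp add: LIM_zero_iff)
  qed
  obtain g where g: "log_conv A f g" using f by (auto simp: log_dom_def)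
  have "(THE g. log_conv A f g) = g"
  proof (rule the_equality[where P = "log_conv A f", OF g])
    fix g' assume "log_conv A f g'"
    then show "g' = g" using LIMSEQ_unique[OF coord coord[OF g]] by blast
  qed
  then have "- app (op_log A) f n = g n"
    by (simp add: op_log_def app_def[of "(_, _)"] vscale_def)
  then show ?thesis using coord[OF g] by simp
qed

lemma Xp_tendsto_coord:
  assumes "\<psi> \<in> dom (Xp p)"
  shows "(\<lambda>K. (\<Sum>k=1..K. 1 / of_nat k * poly_op (p ^ k) left_shift \<psi> n)
            - (\<Sum>k=1..K. 1 / of_nat k * poly_op (map_poly cnj p ^ k) right_shift \<psi> n))
         \<longlonglongrightarrow> - app (Xp p) \<psi> n"
proof -
  have dom: "\<psi> \<in> log_dom (Yp p)" "\<psi> \<in> log_dom (op_adj (Yp p))"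
    using assms by (simp_all add: Xp_def dom_op_sub op_log_def dom_def[of "(_, _)"])
  then have l2: "\<psi> \<in> l2" using log_dom_subset_l2 by blast
  have partial: "log_partial (Yp p) \<psi> K = (\<lambda>n. \<Sum>k=1..K. 1 / of_nat k * poly_op (p ^ k) left_shift \<psi> n)"
    "log_partial (op_adj (Yp p)) \<psi> K
       = (\<lambda>n. \<Sum>k=1..K. 1 / of_nat k * poly_op (map_poly cnj p ^ k) right_shift \<psi> n)" for K
    by (simp_all add: log_partial_def app_pow_one_minus_Yp app_pow_one_minus_adj_Yp l2)
  have "(\<lambda>K. log_partial (Yp p) \<psi> K n) \<longlonglongrightarrow> - app (op_log (Yp p)) \<psi> n"
    by (rule log_partial_tendsto_coord[OF dom(1)]) (simp only: partial, rule l2_sum, simp, rule l2_poly_left_shift[OF l2])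
  moreover have "(\<lambda>K. log_partial (op_adj (Yp p)) \<psi> K n) \<longlonglongrightarrow> - app (op_log (op_adj (Yp p))) \<psi> n"
    by (rule log_partial_tendsto_coord[OF dom(2)]) (simp only: partial, rule l2_sum, simp, rule l2_poly_right_shift[OF l2])
  ultimately show ?thesis
    using tendsto_diff by (fastforce simp: partial Xp_def app_op_sub vsub_def)
qed

subsection \<open>The commutator of \<open>N\<close> with \<open>X\<^sub>p\<close>\<close>

lemma poly_left_shift_power_tendsto_coord:
  assumes "\<forall>f\<in>l2. (\<lambda>k. l2norm (poly_op (p ^ k) left_shift f)) \<longlonglongrightarrow> 0" and "h \<in> l2"
  shows "(\<lambda>K. poly_op (p ^ K) left_shift h n) \<longlonglongrightarrow> 0"
  using assms by (intro l2norm_tendsto_zero_coord l2_poly_left_shift) auto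

lemma map_poly_cnj_power: "map_poly cnj (p ^ k) = map_poly cnj p ^ k"
  by (simp add: poly_eq_poly_eq_iff[symmetric] fun_eq_iff poly_power)

text \<open>Weak convergence suffices on the adjoint side: the \<open>n\<close>-th coordinate of
  \<open>p(L)\<^sup>*\<^sup>K w\<close> is \<open>\<langle>w, p(L)\<^sup>K e\<^sub>n\<rangle>\<close>.\<close>

lemma poly_right_shift_power_tendsto_coord:
  assumes strong: "\<forall>f\<in>l2. (\<lambda>k. l2norm (poly_op (p ^ k) left_shift f)) \<longlonglongrightarrow> 0" and w: "w \<in> l2"
  shows "(\<lambda>K. poly_op (map_poly cnj p ^ K) right_shift w n) \<longlonglongrightarrow> 0"
proof (rule Lim_null_comparison)
  let ?e = "\<lambda>K. poly_op (p ^ K) left_shift (unit_vec n)"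
  show "(\<lambda>K. l2norm (?e K) * l2norm w) \<longlonglongrightarrow> 0"
    using strong l2_unit_vec by (intro tendsto_mult_left_zero) blast
  show "\<forall>\<^sub>F K in sequentially. norm (poly_op (map_poly cnj p ^ K) right_shift w n) \<le> l2norm (?e K) * l2norm w"
  proof (intro always_eventually allI)
    fix K
    have "norm (poly_op (map_poly cnj p ^ K) right_shift w n) = cmod (l2inner (?e K) w)"
      by (simp add: l2inner_poly_left_shift[OF l2_unit_vec w] l2inner_unit_vec_left map_poly_cnj_power)
    also have "\<dots> \<le> l2norm (?e K) * l2norm w"
      by (rule l2_Cauchy_Schwarz[OF l2_poly_left_shift[OF l2_unit_vec] w])
    finally show "norm (poly_op (map_poly cnj p ^ K) right_shift w n) \<le> l2norm (?e K) * l2norm w" .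
  qed
qed

lemma commutator_Xp_partial_sum:
  assumes "poly_op (pCons 0 (pderiv (1 - p))) left_shift \<phi> = poly_op (1 - p) left_shift h"
    and "poly_op (pCons 0 (pderiv (1 - map_poly cnj p))) right_shift \<phi> = poly_op (1 - map_poly cnj p) right_shift w"
  shows "of_nat n * ((\<Sum>k=1..K. 1 / of_nat k * poly_op (p ^ k) left_shift \<phi> n)
                      - (\<Sum>k=1..K. 1 / of_nat k * poly_op (map_poly cnj p ^ k) right_shift \<phi> n))
         - ((\<Sum>k=1..K. 1 / of_nat k * poly_op (p ^ k) left_shift (number_op \<phi>) n)
            - (\<Sum>k=1..K. 1 / of_nat k * poly_op (map_poly cnj p ^ k) right_shift (number_op \<phi>) n))
         = h n + w n - poly_op (p ^ K) left_shift h n - poly_op (map_poly cnj p ^ K) right_shift w n"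
proof -
  have split: "x * (a - b) - (c - d) = (x * a - c) - (x * b - d)" for x a b c d :: complex
    by (simp add: algebra_simps)
  show ?thesis
    unfolding split commutator_log_partial_sum[OF seq_linear_left_shift number_op_left_shift assms(1)]
      commutator_log_partial_sum[OF seq_linear_right_shift number_op_right_shift assms(2)]
    by simp
qed

lemma number_op_commutator_Xp:
  assumes strong: "\<forall>f\<in>l2. (\<lambda>k. l2norm (poly_op (p ^ k) left_shift f)) \<longlonglongrightarrow> 0"
    and intertwine: "\<And>v. (left_shift ^^ m) (poly_op (map_poly cnj (1 - p)) right_shift v)
                          = (\<lambda>n. \<kappa> * poly_op (1 - p) left_shift v n)"
    and "\<kappa> \<noteq> 0"
    and g: "g \<in> l2" and \<phi>: "\<phi> = poly_op (map_poly cnj (1 - p)) right_shift g"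
    and dom: "\<phi> \<in> dom (Xp p)" "number_op \<phi> \<in> dom (Xp p)"
  shows "of_nat n * app (Xp p) \<phi> n - app (Xp p) (number_op \<phi>) n = - of_nat m * \<phi> n"
proof -
  define Q where "Q = map_poly cnj (1 - p)"
  define w where "w = poly_op (pCons 0 (pderiv Q)) right_shift g"
  define h where "h = (\<lambda>n. of_nat m * \<phi> n - w n)"
  have "\<phi> \<in> l2" "w \<in> l2" using g by (simp_all add: \<phi> w_def l2_poly_right_shift)
  then have "h \<in> l2" by (simp add: h_def l2_diff l2_scale)
  have factor_L: "poly_op (pCons 0 (pderiv (1 - p))) left_shift \<phi> = poly_op (1 - p) left_shift h"
    using intertwining_derivative_identity[OF intertwine \<open>\<kappa> \<noteq> 0\<close>, of g]
    by (simp add: \<phi> h_def w_def Q_def)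
  have cnj_p: "map_poly cnj p = 1 - Q"
    using one_minus_map_poly_cnj[of p] by (simp add: Q_def)
  have factor_R: "poly_op (pCons 0 (pderiv (1 - map_poly cnj p))) right_shift \<phi> = poly_op (1 - map_poly cnj p) right_shift w"
    by (simp add: cnj_p \<phi> w_def Q_def poly_op_commute[OF seq_linear_right_shift])
  define A where "A K = of_nat n * ((\<Sum>k=1..K. 1 / of_nat k * poly_op (p ^ k) left_shift \<phi> n)
                      - (\<Sum>k=1..K. 1 / of_nat k * poly_op (map_poly cnj p ^ k) right_shift \<phi> n))
         - ((\<Sum>k=1..K. 1 / of_nat k * poly_op (p ^ k) left_shift (number_op \<phi>) n)
            - (\<Sum>k=1..K. 1 / of_nat k * poly_op (map_poly cnj p ^ k) right_shift (number_op \<phi>) n))" for K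
  have "A K = of_nat m * \<phi> n - poly_op (p ^ K) left_shift h n - poly_op (map_poly cnj p ^ K) right_shift w n" for K
    using commutator_Xp_partial_sum[OF factor_L factor_R, of n K] by (simp add: A_def h_def)
  then have "A = (\<lambda>K. of_nat m * \<phi> n - poly_op (p ^ K) left_shift h n - poly_op (map_poly cnj p ^ K) right_shift w n)"
    by (rule ext)
  also have "\<dots> \<longlonglongrightarrow> of_nat m * \<phi> n - 0 - 0"
    using poly_left_shift_power_tendsto_coord[OF strong \<open>h \<in> l2\<close>]
      poly_right_shift_power_tendsto_coord[OF strong \<open>w \<in> l2\<close>]
    by (intro tendsto_diff tendsto_const)
  finally have "A \<longlonglongrightarrow> of_nat m * \<phi> n"
    by simp
  moreover have "A \<longlonglongrightarrow> of_nat n * (- app (Xp p) \<phi> n) - (- app (Xp p) (number_op \<phi>) n)"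
    unfolding A_def by (intro tendsto_diff tendsto_mult tendsto_const Xp_tendsto_coord dom)
  ultimately have "of_nat n * (- app (Xp p) \<phi> n) - (- app (Xp p) (number_op \<phi>) n) = of_nat m * \<phi> n"
    using LIMSEQ_unique by blast
  then show ?thesis by (simp add: algebra_simps)
qed

subsection \<open>Unimodular roots\<close>

lemma smult_prod_list: "(\<Prod>x\<leftarrow>xs. smult (c x) (q x)) = smult (\<Prod>x\<leftarrow>xs. c x) (\<Prod>x\<leftarrow>xs. q x)"
  by (induction xs) (simp_all add: mult_smult_left mult_smult_right mult.commute)

lemma map_poly_cnj_root_factors: "map_poly cnj (\<Prod>a\<leftarrow>as. [:- a, 1:]) = (\<Prod>a\<leftarrow>as. [:- cnj a, 1:])"
proof -
  have eval: "poly (\<Prod>a\<leftarrow>bs. [:- a, 1:]) x = (\<Prod>a\<leftarrow>bs. x - a)" for bs and x :: complex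
    by (induction bs) (simp_all add: ring_distribs del: mult_minus_left minus_mult_left)
  have "cnj (\<Prod>a\<leftarrow>as. cnj x - a) = (\<Prod>a\<leftarrow>as. x - cnj a)" for x
    by (induction as) simp_all
  then show ?thesis
    using eval[of "map cnj as"] by (simp add: poly_eq_poly_eq_iff[symmetric] fun_eq_iff eval o_def)
qed

lemma root_factors_list: "mset as = proots (P :: complex poly) \<Longrightarrow> P = smult (lead_coeff P) (\<Prod>a\<leftarrow>as. [:- a, 1:])"
  using complex_poly_decompose_multiset[of P] prod_mset_prod_list[of "map (\<lambda>a. [:- a, 1:]) as"]
  by simp

lemma unimodular_root_factors:
  assumes "\<forall>a\<in>set as. cmod a = 1"
  shows "(\<Prod>a\<leftarrow>as. [:1, - cnj a:]) = smult (\<Prod>a\<leftarrow>as. - cnj a) (\<Prod>a\<leftarrow>as. [:- a, 1:])"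
    and "(\<Prod>a\<leftarrow>as. [:- 1, a:]) = smult (\<Prod>a\<leftarrow>as. a) (\<Prod>a\<leftarrow>as. [:- cnj a, 1:])"
proof -
  have "cnj a * a = 1" if "a \<in> set as" for a
    using assms that by (simp add: complex_norm_square[symmetric] mult.commute)
  then have "map (\<lambda>a. [:1, - cnj a:]) as = map (\<lambda>a. smult (- cnj a) [:- a, 1:]) as"
    and "map (\<lambda>a. [:- 1, a:]) as = map (\<lambda>a. smult a [:- cnj a, 1:]) as"
    by (auto simp: mult.commute)
  then show "(\<Prod>a\<leftarrow>as. [:1, - cnj a:]) = smult (\<Prod>a\<leftarrow>as. - cnj a) (\<Prod>a\<leftarrow>as. [:- a, 1:])"
    and "(\<Prod>a\<leftarrow>as. [:- 1, a:]) = smult (\<Prod>a\<leftarrow>as. a) (\<Prod>a\<leftarrow>as. [:- cnj a, 1:])"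
    by (simp_all only: smult_prod_list)
qed

lemma unimodular_roots_intertwining:
  assumes roots: "mset as = proots P" and "P \<noteq> 0" and unimodular: "\<forall>a\<in>set as. cmod a = 1"
  shows "\<exists>\<kappa>. \<kappa> \<noteq> 0 \<and> (\<forall>v. (left_shift ^^ length as) (poly_op (map_poly cnj P) right_shift v)
                                = (\<lambda>n. \<kappa> * poly_op P left_shift v n))"
proof -
  let ?c = "lead_coeff P" and ?u = "\<Prod>a\<leftarrow>as. - cnj a"
  have c: "?c \<noteq> 0" using \<open>P \<noteq> 0\<close> by simp
  have u: "?u \<noteq> 0" using unimodular by (auto simp: prod_list_zero_iff)
  have cnj_P: "map_poly cnj P = smult (cnj ?c) (\<Prod>a\<leftarrow>map cnj as. [:- a, 1:])"
    by (subst root_factors_list[OF roots]) (simp add: map_poly_smult map_poly_cnj_root_factors o_def)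
  have "(left_shift ^^ length as) (poly_op (map_poly cnj P) right_shift v)
      = (\<lambda>n. (cnj ?c * ?u / ?c) * poly_op P left_shift v n)" for v
  proof -
    have "(left_shift ^^ length as) (poly_op (map_poly cnj P) right_shift v)
        = (\<lambda>n. cnj ?c * poly_op (\<Prod>a\<leftarrow>as. [:1, - cnj a:]) left_shift v n)"
      using funpow_left_shift_poly_right_shift[of "map cnj as" v]
      by (simp add: cnj_P poly_op_smult funpow_left_shift o_def fun_eq_iff)
    also have "\<dots> = (\<lambda>n. (cnj ?c * ?u / ?c) * poly_op P left_shift v n)"
      using c by (subst (2) root_factors_list[OF roots])
        (simp add: unimodular_root_factors(1)[OF unimodular] poly_op_smult)
    finally show ?thesis .
  qed
  then show ?thesis using c u by (intro exI[of _ "cnj ?c * ?u / ?c"]) simp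
qed

lemma app_root_prod: "app (root_prod as) f = poly_op (\<Prod>a\<leftarrow>as. [:- 1, a:]) right_shift f"
proof (induction as arbitrary: f)
  case Nil
  then show ?case by simp
next
  case (Cons a as)
  let ?w = "poly_op (\<Prod>a\<leftarrow>as. [:- 1, a:]) right_shift f"
  have "app (root_prod (a # as)) f = (\<lambda>n. a * right_shift ?w n - ?w n)"
    by (simp add: app_op_comp app_op_sub app_op_scale app_opLstar Cons.IH vsub_def vscale_def)
  also have "\<dots> = poly_op [:- 1, a:] right_shift ?w"
    by (simp add: poly_op_pCons[OF seq_linear_right_shift] poly_op_const seq_linear_scale[OF seq_linear_right_shift]
        seq_linear_zero[OF seq_linear_right_shift])
  also have "\<dots> = poly_op (\<Prod>a\<leftarrow>a # as. [:- 1, a:]) right_shift f"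
    by (simp only: list.map prod_list.Cons poly_op_mult[OF seq_linear_right_shift])
  finally show ?case .
qed

lemma range_root_prod:
  assumes roots: "mset as = proots P" and "P \<noteq> 0" and unimodular: "\<forall>a\<in>set as. cmod a = 1"
    and "\<phi> \<in> op_range (root_prod as)"
  shows "\<exists>g\<in>l2. \<phi> = poly_op (map_poly cnj P) right_shift g"
proof -
  have "dom (root_prod as) \<subseteq> l2"
    by (induction as) (auto simp: dom_op_comp)
  then obtain f where f: "f \<in> l2" "\<phi> = poly_op (\<Prod>a\<leftarrow>as. [:- 1, a:]) right_shift f"
    using assms(4) by (auto simp: op_range_def app_root_prod)
  let ?c = "(\<Prod>a\<leftarrow>as. a) / cnj (lead_coeff P)"
  have "map_poly cnj P = smult (cnj (lead_coeff P)) (\<Prod>a\<leftarrow>as. [:- cnj a, 1:])"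
    by (subst root_factors_list[OF roots]) (simp add: map_poly_smult map_poly_cnj_root_factors)
  moreover have "poly_op (map_poly cnj P) right_shift (\<lambda>n. ?c * f n) = (\<lambda>n. ?c * poly_op (map_poly cnj P) right_shift f n)"
    by (rule seq_linear_scale[OF seq_linear_poly_op[OF seq_linear_right_shift]])
  ultimately have "\<phi> = poly_op (map_poly cnj P) right_shift (\<lambda>n. ?c * f n)"
    using \<open>P \<noteq> 0\<close> by (simp add: f unimodular_root_factors(2)[OF unimodular] poly_op_smult)
  then show ?thesis using l2_scale[OF f(1)] by blast
qed

lemma commutator_on_opN_scale:
  assumes "commutator_on opN X (op_scale \<mu> op_id) D"
  shows "commutator_on opN (op_scale c X) (op_scale (c * \<mu>) op_id) D"
proof -
  have "dom (op_comp opN X) \<subseteq> dom (op_comp opN (op_scale c X))"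
    by (auto simp: dom_op_comp dom_op_scale app_op_scale dom_opN vscale_def l2_scale
        seq_linear_scale[OF seq_linear_number_op])
  moreover have "dom (op_comp (op_scale c X) opN) = dom (op_comp X opN)"
    by (simp add: dom_op_comp dom_op_scale)
  moreover have "vsub (app opN (app (op_scale c X) \<phi>)) (app (op_scale c X) (app opN \<phi>))
      = vscale c (vsub (app opN (app X \<phi>)) (app X (app opN \<phi>)))" for \<phi>
    by (simp add: app_op_scale app_opN number_op_def vsub_def vscale_def fun_eq_iff algebra_simps)
  ultimately show ?thesis
    using assms by (auto simp: commutator_on_def dom_op_scale app_op_scale vscale_def)
qed

lemma commutator_opN_Xp:
  assumes strong: "\<forall>f\<in>l2. (\<lambda>k. l2norm (poly_op (p ^ k) left_shift f)) \<longlonglongrightarrow> 0"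
    and intertwine: "\<And>v. (left_shift ^^ m) (poly_op (map_poly cnj (1 - p)) right_shift v)
                          = (\<lambda>n. \<kappa> * poly_op (1 - p) left_shift v n)"
    and "\<kappa> \<noteq> 0"
    and range: "\<And>\<phi>. \<phi> \<in> R \<Longrightarrow> \<exists>g\<in>l2. \<phi> = poly_op (map_poly cnj (1 - p)) right_shift g"
  shows "commutator_on opN (Xp p) (op_scale (- of_nat m) op_id)
           (R \<inter> dom (op_comp (Xp p) opN) \<inter> dom (op_comp opN (Xp p)))"
  unfolding commutator_on_def
proof (intro conjI ballI subsetI)
  fix \<phi> assume \<phi>: "\<phi> \<in> R \<inter> dom (op_comp (Xp p) opN) \<inter> dom (op_comp opN (Xp p))"
  then show "\<phi> \<in> dom (op_comp opN (Xp p)) \<inter> dom (op_comp (Xp p) opN)" by blast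
  show "\<phi> \<in> dom (op_scale (- of_nat m) op_id)"
    using \<phi> by (simp add: dom_op_scale dom_op_comp dom_opN)
  obtain g where "g \<in> l2" "\<phi> = poly_op (map_poly cnj (1 - p)) right_shift g"
    using range \<phi> by blast
  from number_op_commutator_Xp[OF strong intertwine \<open>\<kappa> \<noteq> 0\<close> this] \<phi>
  show "vsub (app opN (app (Xp p) \<phi>)) (app (Xp p) (app opN \<phi>)) = app (op_scale (- of_nat m) op_id) \<phi>"
    by (simp add: dom_op_comp dom_opN app_opN app_op_scale vsub_def vscale_def number_op_def fun_eq_iff)
qed

theorem mainTheorem15:
  fixes p :: "complex poly" and m :: nat and \<alpha> :: "complex list"
  assumes "degree p = m" and "m \<ge> 1"
    and "inj_on (app (Yp p)) (dom (Yp p))"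
    and "\<forall>f\<in>l2. (\<lambda>k. l2norm (app (op_pow (op_poly p opL) k) f)) \<longlonglongrightarrow> 0"
    and "\<forall>z. 1 - poly p z = 0 \<longrightarrow> cmod z = 1"
    and "length \<alpha> = m" and "mset \<alpha> = proots (1 - p)"
  shows "commutator_on opN (op_scale (\<i> / of_nat m) (Xp p)) (op_scale (- \<i>) op_id)
           (op_range (root_prod \<alpha>) \<inter> dom (op_comp (Xp p) opN) \<inter> dom (op_comp opN (Xp p)))"
proof -
  have "1 - p \<noteq> 0"
  proof
    assume "1 - p = 0"
    then have "p = 1" by simp
    then show False using assms(1,2) by simp
  qed
  have "set \<alpha> = {z. poly (1 - p) z = 0}"
    using assms(7) \<open>1 - p \<noteq> 0\<close> by (metis set_count_proots set_mset_mset)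
  then have unimodular: "\<forall>a\<in>set \<alpha>. cmod a = 1"
    using assms(5) by simp
  obtain \<kappa> where "\<kappa> \<noteq> 0" and intertwine: "\<And>v. (left_shift ^^ m) (poly_op (map_poly cnj (1 - p)) right_shift v)
      = (\<lambda>n. \<kappa> * poly_op (1 - p) left_shift v n)"
    using unimodular_roots_intertwining[OF assms(7) \<open>1 - p \<noteq> 0\<close> unimodular] assms(6) by blast
  have strong: "\<forall>f\<in>l2. (\<lambda>k. l2norm (poly_op (p ^ k) left_shift f)) \<longlonglongrightarrow> 0"
    using assms(4) by (simp add: app_pow_op_poly_opL)
  from commutator_on_opN_scale[OF commutator_opN_Xp[OF strong intertwine \<open>\<kappa> \<noteq> 0\<close>
      range_root_prod[OF assms(7) \<open>1 - p \<noteq> 0\<close> unimodular]], where c = "\<i> / of_nat m"]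
  show ?thesis using assms(2) by simp
qed

end
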